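(* Let $A$ be a $2\times n$ array with pairwise distinct entries and $k\ge 1$. Then the graph $G_{12}$ on $A$ is a $k$-page graph, i.e. there are no $k+1$ edges $(i_1,j_1),\dots,(i_{k+1},j_{k+1})\in E(G_{12})$ with $i_1<i_2<\dots<i_{k+1}<j_1<j_2<\dots<j_{k+1}$.
   Context: For a $2\times n$ array $A$ with distinct entries from a total order, the graph $G_{12}$ has vertex set $\{1,\dots,n\}$, and $(i,j)$ with $i<j$ is an edge iff (i) $A[1][i]<A[2][j]$; (ii) at most $k-1$ positions in $A[1..2][i..j]$ (rows 1 and 2, columns $i..j$) hold values larger than both $A[1][i]$ and $A[2][j]$; and (iii) there is no $j'>i$ such that $(i,j')$ satisfies (i) and (ii) and $A[1][i]<A[2][j']<A[2][j]$. *)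

theory Defs
  imports Main
begin

text \<open>A 2 x n array is modelled as A :: nat \<Rightarrow> nat \<Rightarrow> 'a, where A r c is the entry
  in row r \<in> {1,2} and column c \<in> {1..n}.\<close>

text \<open>Conditions (i) and (ii) for the pair (i,j).\<close>
definition G12_cond :: "nat \<Rightarrow> (nat \<Rightarrow> nat \<Rightarrow> 'a::linorder) \<Rightarrow> nat \<Rightarrow> nat \<Rightarrow> bool" where
  "G12_cond k A i j \<longleftrightarrow>
     A 1 i < A 2 j \<and>
     card {(r, c). r \<in> {1::nat, 2} \<and> c \<in> {i..j} \<and> A r c > A 1 i \<and> A r c > A 2 j} \<le> k - 1"

definition G12_edge :: "nat \<Rightarrow> nat \<Rightarrow> (nat \<Rightarrow> nat \<Rightarrow> 'a::linorder) \<Rightarrow> nat \<Rightarrow> nat \<Rightarrow> bool" where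
  "G12_edge n k A i j \<longleftrightarrow>
     1 \<le> i \<and> i < j \<and> j \<le> n \<and> G12_cond k A i j \<and>
     \<not> (\<exists>j'. i < j' \<and> j' \<le> n \<and> G12_cond k A i j' \<and> A 1 i < A 2 j' \<and> A 2 j' < A 2 j)"

end

theory Submission
  imports Defs
begin

text \<open>Of $k+1$ pairwise crossing edges $(I_t, J_t)$, consider the one whose right end $J_t$ carries
  the smallest bottom-row value $m = A_2(J_t)$. If every later left end $I_u$ ($u > t$) carried a top-row
  value above $m$, then these $k-t$ cells together with the $t$ cells $A_2(J_s)$, $s < t$, would be
  $k$ cells of columns $I_t..J_t$ exceeding both $A_1(I_t)$ and $m$, violating condition (ii).
  So some $u > t$ has $A_1(I_u) < m$; then $(I_u, J_t)$ again satisfies (i) and (ii), and since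
  $m < A_2(J_u)$ it contradicts condition (iii) for the edge $(I_u, J_u)$.\<close>

definition G12_above :: "(nat \<Rightarrow> nat \<Rightarrow> 'a::linorder) \<Rightarrow> nat \<Rightarrow> nat \<Rightarrow> (nat \<times> nat) set" where
  "G12_above A i j = {(r, c). r \<in> {1, 2} \<and> c \<in> {i..j} \<and> A r c > A 1 i \<and> A r c > A 2 j}"

lemma finite_G12_above: "finite (G12_above A i j)"
  by (rule finite_subset[of _ "{1, 2} \<times> {i..j}"]) (auto simp: G12_above_def)

lemma G12_cond_iff: "G12_cond k A i j \<longleftrightarrow> A 1 i < A 2 j \<and> card (G12_above A i j) \<le> k - 1"
  by (simp add: G12_cond_def G12_above_def)

lemma card_le_if_G12_cond:
  assumes "G12_cond k A i j" and "X \<subseteq> G12_above A i j"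
  shows "card X \<le> k - 1"
  using card_mono[OF finite_G12_above assms(2)] assms(1) by (simp add: G12_cond_iff)

lemma G12_cond_shrink_left:
  assumes cond: "G12_cond k A i j" and "i \<le> i'" and "A 1 i' < A 2 j"
  shows "G12_cond k A i' j"
proof -
  have "A 1 i < A 2 j"
    using cond by (simp add: G12_cond_iff)
  then have "G12_above A i' j \<subseteq> G12_above A i j"
    using assms(2,3) by (auto simp: G12_above_def)
  then show ?thesis
    using assms(3) card_le_if_G12_cond[OF cond] by (simp add: G12_cond_iff)
qed

lemma ex_strict_arg_min_on:
  fixes f :: "'b \<Rightarrow> 'a::linorder"
  assumes "finite S" "S \<noteq> {}" "inj_on f S"
  obtains t where "t \<in> S" "\<And>s. s \<in> S \<Longrightarrow> s \<noteq> t \<Longrightarrow> f t < f s"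
proof -
  obtain t where t: "t \<in> S" "\<not> (\<exists>s\<in>S. f s < f t)"
    using ex_is_arg_min_if_finite[OF assms(1,2), of f] by (auto simp: is_arg_min_def)
  show thesis
  proof (rule that[OF t(1)])
    fix s assume "s \<in> S" "s \<noteq> t"
    then have "f s \<noteq> f t"
      using assms(3) t(1) by (auto dest: inj_onD)
    then show "f t < f s"
      using t(2) \<open>s \<in> S\<close> by auto
  qed
qed

lemma crossing_G12_cond_ex_later_left_below:
  assumes I: "strict_mono_on {..k} I" and J: "strict_mono_on {..k} J" and cross: "I k < J 0"
    and "k \<ge> 1" and t: "t \<le> k" and cond: "G12_cond k A (I t) (J t)"
    and earlier: "\<And>s. s < t \<Longrightarrow> A 2 (J t) < A 2 (J s)"
    and later_neq: "\<And>u. t < u \<Longrightarrow> u \<le> k \<Longrightarrow> A 1 (I u) \<noteq> A 2 (J t)"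
  shows "\<exists>u. t < u \<and> u \<le> k \<and> A 1 (I u) < A 2 (J t)"
proof (rule ccontr)
  assume "\<nexists>u. t < u \<and> u \<le> k \<and> A 1 (I u) < A 2 (J t)"
  then have later: "A 2 (J t) < A 1 (I u)" if "t < u" "u \<le> k" for u
    using later_neq[OF that] that by fastforce
  have left_below: "A 1 (I t) < A 2 (J t)"
    using cond by (simp add: G12_cond_iff)
  have I_le: "I a \<le> I b" and J_le: "J a \<le> J b" if "a \<le> b" "b \<le> k" for a b
    using that strict_mono_on_leD[OF I] strict_mono_on_leD[OF J] by auto
  define tops where "tops = (\<lambda>u. (1::nat, I u)) ` {t<..k}"
  define bottoms where "bottoms = (\<lambda>s. (2::nat, J s)) ` {..<t}"
  have "tops \<subseteq> G12_above A (I t) (J t)"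
  proof (unfold tops_def, rule image_subsetI)
    fix u assume "u \<in> {t<..k}"
    then have "t < u" "u \<le> k" by auto
    moreover have "I t \<le> I u" "I u \<le> J t"
      using I_le[of t u] I_le[of u k] J_le[of 0 t] cross t \<open>t < u\<close> \<open>u \<le> k\<close> by auto
    ultimately show "(1, I u) \<in> G12_above A (I t) (J t)"
      using later[of u] left_below by (auto simp: G12_above_def)
  qed
  moreover have "bottoms \<subseteq> G12_above A (I t) (J t)"
  proof (unfold bottoms_def, rule image_subsetI)
    fix s assume "s \<in> {..<t}"
    then have "s < t" by auto
    moreover have "I t \<le> J s" "J s \<le> J t"
      using I_le[of t k] J_le[of 0 s] J_le[of s t] cross t \<open>s < t\<close> by auto
    ultimately show "(2, J s) \<in> G12_above A (I t) (J t)"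
      using earlier[of s] left_below by (auto simp: G12_above_def)
  qed
  ultimately have "card (tops \<union> bottoms) \<le> k - 1"
    by (intro card_le_if_G12_cond[OF cond]) simp
  moreover have "card tops = k - t"
    using strict_mono_on_imp_inj_on[OF I] by (simp add: tops_def card_image inj_on_def)
  moreover have "card bottoms = t"
    using strict_mono_on_imp_inj_on[OF J] t by (simp add: bottoms_def card_image inj_on_def)
  moreover have "tops \<inter> bottoms = {}"
    by (auto simp: tops_def bottoms_def)
  ultimately show False
    using card_Un_disjoint[of tops bottoms] t \<open>k \<ge> 1\<close> by (simp add: tops_def bottoms_def)
qed

theorem lemma8:
  fixes A :: "nat \<Rightarrow> nat \<Rightarrow> 'a::linorder" and n k :: nat
  assumes distinct: "inj_on (\<lambda>(r, c). A r c) ({1, 2} \<times> {1..n})"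
    and k: "k \<ge> 1"
  shows "\<not> (\<exists>I J :: nat \<Rightarrow> nat.
             strict_mono_on {..k} I \<and> strict_mono_on {..k} J \<and> I k < J 0 \<and>
             (\<forall>t\<le>k. G12_edge n k A (I t) (J t)))"
proof
  assume "\<exists>I J :: nat \<Rightarrow> nat.
             strict_mono_on {..k} I \<and> strict_mono_on {..k} J \<and> I k < J 0 \<and>
             (\<forall>t\<le>k. G12_edge n k A (I t) (J t))"
  then obtain I J :: "nat \<Rightarrow> nat" where I: "strict_mono_on {..k} I" and J: "strict_mono_on {..k} J"
    and cross: "I k < J 0" and edge: "\<And>t. t \<le> k \<Longrightarrow> G12_edge n k A (I t) (J t)"
    by blast
  have cols: "I t \<in> {1..n}" "J t \<in> {1..n}" if "t \<le> k" for t
    using edge[OF that] by (auto simp: G12_edge_def)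
  have A_neq: "A r c \<noteq> A r' c'"
    if "(r, c) \<noteq> (r', c')" "r \<in> {1, 2}" "r' \<in> {1, 2}" "c \<in> {1..n}" "c' \<in> {1..n}" for r c r' c'
    using inj_onD[OF distinct, of "(r, c)" "(r', c')"] that by auto
  have "inj_on (\<lambda>s. A 2 (J s)) {..k}"
  proof (rule inj_onI)
    fix s s' assume "s \<in> {..k}" "s' \<in> {..k}" "A 2 (J s) = A 2 (J s')"
    then show "s = s'"
      using A_neq[of 2 "J s" 2 "J s'"] cols strict_mono_on_eqD[OF J] by fastforce
  qed
  then obtain t where t: "t \<le> k" and min: "\<And>s. s \<le> k \<Longrightarrow> s \<noteq> t \<Longrightarrow> A 2 (J t) < A 2 (J s)"
    using ex_strict_arg_min_on[of "{..k}" "\<lambda>s. A 2 (J s)"] by auto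
  have "G12_cond k A (I t) (J t)"
    using edge[OF t] by (simp add: G12_edge_def)
  moreover have "A 2 (J t) < A 2 (J s)" if "s < t" for s
    using min[of s] that t by simp
  moreover have "A 1 (I u) \<noteq> A 2 (J t)" if "u \<le> k" for u
    using A_neq[of 1 "I u" 2 "J t"] cols that t by simp
  ultimately obtain u where u: "t < u" "u \<le> k" "A 1 (I u) < A 2 (J t)"
    using crossing_G12_cond_ex_later_left_below[OF I J cross k t] by blast
  have "G12_cond k A (I u) (J t)"
    using G12_cond_shrink_left[of k A "I t" "J t" "I u"] edge[OF t] u strict_mono_on_leD[OF I, of t u]
    by (auto simp: G12_edge_def)
  moreover have "I u < J t"
    using u t cross strict_mono_on_leD[OF I, of u k] strict_mono_on_leD[OF J, of 0 t] by auto
  ultimately show False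
    using edge[OF \<open>u \<le> k\<close>] u min[of u] cols(2)[OF t] by (auto simp: G12_edge_def)
qed

end
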